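(* Assume the setting below (assumptions A1–A3, any step size $\alpha>0$). For every integer $k\ge 0$ let $$\Delta_k=\frac{L(\tau+1)}{2}\sum_{j=k-\tau}^{k}\|x_{j+1}-x_j\|^2 .$$ Then for every $k\ge 0$ and every $x\in\mathbb{R}^d$, $$\Phi(x_{k+1})\le \Phi(x)+\frac{1}{2\alpha}\|x-x_k\|^2-\frac{1}{2\alpha}\|x-x_{k+1}\|^2-\frac{1}{2\alpha}\|x_{k+1}-x_k\|^2+\Delta_k .$$
   Context: Problem: minimize $\Phi(x)=F(x)+h(x)$ over $x\in\mathbb{R}^d$, where $F(x)=\sum_{n=1}^N f_n(x)$. Assumption A1: each $f_n:\mathbb{R}^d\to\mathbb{R}$ is convex and differentiable with $\|\nabla f_n(x)-\nabla f_n(y)\|\le L_n\|x-y\|$ for all $x,y$; set $L=\sum_{n=1}^N L_n$. Assumption A2: $h:\mathbb{R}^d\to(-\infty,\infty]$ is proper, closed, convex, and $\partial h(x)\neq\emptyset$ for all $x$ in its effective domain. Assumption A3: the delays $\tau_k^n$ ($k\ge0$, $n=1,\dots,N$) are integers with $\tau_k^n\in\{0,1,\dots,\tau\}$ for a fixed nonnegative integer $\tau$ (the delay parameter). PIAG method: given $x_0\in\mathbb{R}^d$ and step size $\alpha>0$, with the convention $x_j=x_0$ for $j<0$, for $k\ge0$ set $g_k=\sum_{n=1}^N\nabla f_n(x_{k-\tau_k^n})$ and $$x_{k+1}=\arg\min_{x\in\mathbb{R}^d}\Big\{h(x)+\langle g_k,x-x_k\rangle+\frac{1}{2\alpha}\|x-x_k\|^2\Big\}.$$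 In particular $\|x_{j+1}-x_j\|=0$ for $j<0$. *)

theory Defs
  imports "HOL-Analysis.Analysis"
begin

definition epigraph :: "('a \<Rightarrow> ereal) \<Rightarrow> ('a \<times> real) set" where
  "epigraph h = {(x, t). h x \<le> ereal t}"

definition effective_domain :: "('a \<Rightarrow> ereal) \<Rightarrow> 'a set" where
  "effective_domain h = {x. h x < \<infinity>}"

definition proper_fun :: "('a \<Rightarrow> ereal) \<Rightarrow> bool" where
  "proper_fun h \<longleftrightarrow> (\<forall>x. h x > -\<infinity>) \<and> (\<exists>x. h x < \<infinity>)"

definition closed_fun :: "('a::real_normed_vector \<Rightarrow> ereal) \<Rightarrow> bool" where
  "closed_fun h \<longleftrightarrow> closed (epigraph h)"

definition convex_fun :: "('a::real_vector \<Rightarrow> ereal) \<Rightarrow> bool" where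
  "convex_fun h \<longleftrightarrow> convex (epigraph h)"

definition subdifferential :: "('a::real_inner \<Rightarrow> ereal) \<Rightarrow> 'a \<Rightarrow> 'a set" where
  "subdifferential h x = {g. \<forall>y. h y \<ge> h x + ereal (g \<bullet> (y - x))}"

end

theory Submission imports Defs begin

text \<open>Write p = x(k+1), c = x(k) and w_n = x(k - dly k n). For each smooth term, the descent
lemma from w_n to p and the gradient inequality from w_n to z give
f_n p \<le> f_n z + \<langle>\<nabla>f_n(w_n), p - z\<rangle> + L_n/2 \<parallel>p - w_n\<parallel>^2, and telescoping plus Cauchy-Schwarz give
\<parallel>p - w_n\<parallel>^2 \<le> (\<tau>+1) \<Sum>_j \<parallel>x(j+1) - x(j)\<parallel>^2. The proximal step minimises the
1/(2\<alpha>)-strongly convex function h y + \<langle>g, y - c\<rangle> + \<parallel>y - c\<parallel>^2/(2\<alpha>), with g the aggregated delayed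
gradient, so its value at z exceeds its value at p by at least \<parallel>z - p\<parallel>^2/(2\<alpha>). Adding the two
estimates, the terms \<langle>g, p - z\<rangle> cancel.\<close>

lemma has_real_derivative_along_line:
  fixes f :: "'a::real_inner \<Rightarrow> real"
  assumes "(f has_derivative (\<lambda>v. g \<bullet> v)) (at (w + t *\<^sub>R u))"
  shows "((\<lambda>s. f (w + s *\<^sub>R u)) has_real_derivative g \<bullet> u) (at t)"
proof -
  have "((\<lambda>s. w + s *\<^sub>R u) has_derivative (\<lambda>s. s *\<^sub>R u)) (at t)"
    by (auto intro!: derivative_eq_intros)
  from has_derivative_compose[OF this assms]
  have "((\<lambda>s. f (w + s *\<^sub>R u)) has_derivative (\<lambda>s. g \<bullet> (s *\<^sub>R u))) (at t)"
    by (simp add: o_def)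
  moreover have "(\<lambda>s. g \<bullet> (s *\<^sub>R u)) = (*) (g \<bullet> u)" by (auto simp: fun_eq_iff)
  ultimately show ?thesis by (simp add: has_field_derivative_def)
qed

lemma convex_on_gradient_inequality:
  fixes f :: "'a::real_inner \<Rightarrow> real"
  assumes convex: "convex_on UNIV f" and deriv: "(f has_derivative (\<lambda>v. g \<bullet> v)) (at w)"
  shows "f w + g \<bullet> (z - w) \<le> f z"
proof -
  define \<psi> where "\<psi> t = f (w + t *\<^sub>R (z - w))" for t :: real
  have "convex_on UNIV \<psi>"
  proof (rule convex_onI)
    fix t a b :: real assume t: "0 < t" "t < 1"
    have "w + ((1 - t) * a + t * b) *\<^sub>R (z - w)
        = (1 - t) *\<^sub>R (w + a *\<^sub>R (z - w)) + t *\<^sub>R (w + b *\<^sub>R (z - w))"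
      by (simp add: algebra_simps)
    then show "\<psi> ((1 - t) *\<^sub>R a + t *\<^sub>R b) \<le> (1 - t) * \<psi> a + t * \<psi> b"
      unfolding \<psi>_def using convex_onD[OF convex, of t] t by simp
  qed simp
  moreover have "(\<psi> has_real_derivative g \<bullet> (z - w)) (at 0)"
    unfolding \<psi>_def by (rule has_real_derivative_along_line) (use deriv in simp)
  ultimately have "\<psi> 1 - \<psi> 0 \<ge> g \<bullet> (z - w) * (1 - 0)"
    by (intro convex_on_imp_above_tangent) (auto intro: has_field_derivative_at_within)
  then show ?thesis by (simp add: \<psi>_def)
qed

lemma lipschitz_gradient_upper_bound:
  fixes f :: "'a::real_inner \<Rightarrow> real"
  assumes deriv: "\<And>z. (f has_derivative (\<lambda>v. gf z \<bullet> v)) (at z)"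
    and lipschitz: "\<And>y z. norm (gf y - gf z) \<le> L * norm (y - z)"
  shows "f y \<le> f x + gf x \<bullet> (y - x) + L / 2 * (norm (y - x))\<^sup>2"
proof -
  define \<phi> where "\<phi> t = f (x + t *\<^sub>R (y - x)) - t * (gf x \<bullet> (y - x)) - L / 2 * t\<^sup>2 * (norm (y - x))\<^sup>2"
    for t :: real
  have "\<phi> 1 \<le> \<phi> 0"
  proof (rule DERIV_nonpos_imp_nonincreasing[of 0 1])
    fix t :: real assume t: "0 \<le> t" "t \<le> 1"
    let ?x\<^sub>t = "x + t *\<^sub>R (y - x)"
    have deriv_\<phi>: "(\<phi> has_real_derivative
        gf ?x\<^sub>t \<bullet> (y - x) - gf x \<bullet> (y - x) - L * t * (norm (y - x))\<^sup>2) (at t)"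
      unfolding \<phi>_def
      by (rule has_real_derivative_along_line[OF deriv] derivative_eq_intros refl | simp)+
    have "(gf ?x\<^sub>t - gf x) \<bullet> (y - x) \<le> norm (gf ?x\<^sub>t - gf x) * norm (y - x)"
      by (rule norm_cauchy_schwarz)
    also have "\<dots> \<le> L * norm (t *\<^sub>R (y - x)) * norm (y - x)"
      using lipschitz[of ?x\<^sub>t x] by (intro mult_right_mono) auto
    also have "\<dots> = L * t * (norm (y - x))\<^sup>2"
      using t by (simp add: power2_eq_square)
    finally show "\<exists>D. (\<phi> has_real_derivative D) (at t) \<and> D \<le> 0"
      using deriv_\<phi> by (auto simp: inner_diff_left)
  qed simp
  then show ?thesis by (simp add: \<phi>_def)
qed

lemma lipschitz_constant_nonneg:
  fixes g :: "'a::real_normed_vector \<Rightarrow> 'b::real_normed_vector"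
  assumes "norm (g y - g z) \<le> L * norm (y - z)" and "y \<noteq> z"
  shows "L \<ge> 0"
  using assms order_trans[OF norm_ge_zero assms(1)] by (simp add: zero_le_mult_iff)

lemma delayed_gradient_bound:
  fixes f :: "'a::real_inner \<Rightarrow> real"
  assumes "convex_on UNIV f"
    and "\<And>z. (f has_derivative (\<lambda>v. gf z \<bullet> v)) (at z)"
    and "\<And>y z. norm (gf y - gf z) \<le> L * norm (y - z)"
  shows "f p \<le> f z + gf w \<bullet> (p - z) + L / 2 * (norm (p - w))\<^sup>2"
proof -
  have "f p \<le> f w + gf w \<bullet> (p - w) + L / 2 * (norm (p - w))\<^sup>2"
    by (rule lipschitz_gradient_upper_bound) fact+
  moreover have "f w + gf w \<bullet> (z - w) \<le> f z"
    by (rule convex_on_gradient_inequality) fact+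
  moreover have "gf w \<bullet> (p - w) = gf w \<bullet> (p - z) + gf w \<bullet> (z - w)"
    by (simp add: inner_diff_right)
  ultimately show ?thesis by linarith
qed

lemma sum_delayed_gradient_bound:
  fixes f gf :: "'i \<Rightarrow> 'a::real_inner \<Rightarrow> _"
  assumes "finite I"
    and "\<And>n. n \<in> I \<Longrightarrow> convex_on UNIV (f n)"
    and "\<And>n z. n \<in> I \<Longrightarrow> (f n has_derivative (\<lambda>v. gf n z \<bullet> v)) (at z)"
    and "\<And>n y z. n \<in> I \<Longrightarrow> norm (gf n y - gf n z) \<le> L n * norm (y - z)"
    and L_nonneg: "\<And>n. n \<in> I \<Longrightarrow> L n \<ge> 0"
    and delay: "\<And>n. n \<in> I \<Longrightarrow> (norm (p - w n))\<^sup>2 \<le> D"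
  shows "(\<Sum>n\<in>I. f n p) \<le> (\<Sum>n\<in>I. f n z) + (\<Sum>n\<in>I. gf n (w n)) \<bullet> (p - z) + (\<Sum>n\<in>I. L n) / 2 * D"
proof -
  have "f n p \<le> f n z + gf n (w n) \<bullet> (p - z) + L n / 2 * D" if n: "n \<in> I" for n
  proof -
    have "f n p \<le> f n z + gf n (w n) \<bullet> (p - z) + L n / 2 * (norm (p - w n))\<^sup>2"
      using assms n by (intro delayed_gradient_bound) auto
    also have "L n / 2 * (norm (p - w n))\<^sup>2 \<le> L n / 2 * D"
      using L_nonneg[OF n] delay[OF n] by (intro mult_left_mono) auto
    finally show ?thesis by simp
  qed
  then have "(\<Sum>n\<in>I. f n p) \<le> (\<Sum>n\<in>I. f n z + gf n (w n) \<bullet> (p - z) + L n / 2 * D)"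
    by (rule sum_mono)
  also have "\<dots> = (\<Sum>n\<in>I. f n z) + (\<Sum>n\<in>I. gf n (w n)) \<bullet> (p - z) + (\<Sum>n\<in>I. L n) / 2 * D"
    by (simp add: sum.distrib inner_sum_left sum_distrib_right sum_divide_distrib)
  finally show ?thesis .
qed

lemma telescope_int:
  fixes x :: "int \<Rightarrow> 'a::ab_group_add"
  shows "x (k + 1) - x (k - int m) = (\<Sum>j\<in>{k - int m..k}. x (j + 1) - x j)"
proof (induction m)
  case (Suc m)
  have "{k - int (Suc m)..k} = insert (k - int (Suc m)) {k - int m..k}" by auto
  with Suc show ?case by (simp add: algebra_simps)
qed simp

lemma norm_delayed_difference_squared_le:
  fixes x :: "int \<Rightarrow> 'a::real_normed_vector"
  assumes "d \<le> \<tau>"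
  shows "(norm (x (k + 1) - x (k - int d)))\<^sup>2
       \<le> (real \<tau> + 1) * (\<Sum>j\<in>{k - int \<tau>..k}. (norm (x (j + 1) - x j))\<^sup>2)"
proof -
  have "norm (x (k + 1) - x (k - int d)) \<le> (\<Sum>j\<in>{k - int d..k}. norm (x (j + 1) - x j))"
    unfolding telescope_int by (rule norm_sum)
  then have "(norm (x (k + 1) - x (k - int d)))\<^sup>2 \<le> (\<Sum>j\<in>{k - int d..k}. norm (x (j + 1) - x j))\<^sup>2"
    by (intro power_mono) auto
  also have "\<dots> \<le> (\<Sum>j\<in>{k - int d..k}. (norm (x (j + 1) - x j))\<^sup>2) * card {k - int d..k}"
    by (rule sum_squared_le_sum_of_squares)
  also have "\<dots> \<le> (\<Sum>j\<in>{k - int \<tau>..k}. (norm (x (j + 1) - x j))\<^sup>2) * (real \<tau> + 1)"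
    using assms by (intro mult_mono sum_mono2 sum_nonneg) auto
  finally show ?thesis by (simp add: mult.commute)
qed

lemma convex_fun_le_convex_combination:
  assumes "convex_fun h" and "h p = ereal a" and "h z = ereal b" and "0 \<le> t" and "t \<le> 1"
  shows "h ((1 - t) *\<^sub>R p + t *\<^sub>R z) \<le> ereal ((1 - t) * a + t * b)"
proof -
  have "(1 - t) *\<^sub>R (p, a) + t *\<^sub>R (z, b) \<in> epigraph h"
    using assms unfolding convex_fun_def by (intro convexD) (auto simp: epigraph_def)
  then show ?thesis by (simp add: epigraph_def)
qed

lemma norm_convex_combination_squared:
  fixes a b :: "'a::real_inner"
  shows "(norm ((1 - t) *\<^sub>R a + t *\<^sub>R b))\<^sup>2
       = (1 - t) * (norm a)\<^sup>2 + t * (norm b)\<^sup>2 - t * (1 - t) * (norm (b - a))\<^sup>2"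
  by (simp add: power2_norm_eq_inner inner_add_left inner_add_right inner_diff_left
      inner_diff_right inner_commute algebra_simps)

lemma le_of_forall_unit_interval:
  fixes A B c :: real
  assumes "\<And>t. 0 < t \<Longrightarrow> t < 1 \<Longrightarrow> A + (1 - t) * c \<le> B"
  shows "A + c \<le> B"
proof (rule tendsto_upperbound)
  show "((\<lambda>t. A + (1 - t) * c) \<longlongrightarrow> A + c) (at_right 0)"
    by (auto intro!: tendsto_eq_intros)
  show "\<forall>\<^sub>F t in at_right 0. A + (1 - t) * c \<le> B"
    unfolding eventually_at_right[OF zero_less_one] using assms by (intro exI[of _ 1]) auto
qed simp

lemma ereal_le_add_real_shift:
  fixes P Z :: ereal
  assumes "P + ereal a \<le> Z + ereal b" and "P \<noteq> -\<infinity>" and "Z \<noteq> -\<infinity>"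
    and "u + b \<le> v + a + d"
  shows "ereal u + P \<le> ereal v + Z + ereal d"
  using assms by (cases P; cases Z) auto

text \<open>The minimiser \<open>p\<close> of the strongly convex prox objective
\<open>h y + \<langle>g, y - c\<rangle> + \<parallel>y - c\<parallel>\<^sup>2/(2\<alpha>)\<close> is compared with the points \<open>(1 - t) p + t z\<close>; dividing by
\<open>t\<close> and letting \<open>t \<rightarrow> 0\<close> leaves the strong-convexity gap \<open>\<parallel>z - p\<parallel>\<^sup>2/(2\<alpha>)\<close>.\<close>

lemma prox_three_point:
  fixes h :: "'a::real_inner \<Rightarrow> ereal"
  assumes convex: "convex_fun h" and proper: "proper_fun h" and "\<alpha> > 0"
    and minimal: "\<And>y. h p + ereal (g \<bullet> (p - c) + 1 / (2 * \<alpha>) * (norm (p - c))\<^sup>2)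
               \<le> h y + ereal (g \<bullet> (y - c) + 1 / (2 * \<alpha>) * (norm (y - c))\<^sup>2)"
  shows "h p + ereal (g \<bullet> (p - c) + 1 / (2 * \<alpha>) * (norm (p - c))\<^sup>2 + 1 / (2 * \<alpha>) * (norm (z - p))\<^sup>2)
         \<le> h z + ereal (g \<bullet> (z - c) + 1 / (2 * \<alpha>) * (norm (z - c))\<^sup>2)"
proof (cases "h z = \<infinity>")
  case False
  define q where "q y = g \<bullet> (y - c) + 1 / (2 * \<alpha>) * (norm (y - c))\<^sup>2" for y
  define gap where "gap = 1 / (2 * \<alpha>) * (norm (z - p))\<^sup>2"
  have finite: "h y \<noteq> -\<infinity>" for y using proper by (auto simp: proper_fun_def)
  obtain b where b: "h z = ereal b" using False finite[of z] by (cases "h z") auto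
  with minimal[of z] have "h p \<noteq> \<infinity>" by auto
  then obtain a where a: "h p = ereal a" using finite[of p] by (cases "h p") auto
  have "a + q p + (1 - t) * gap \<le> b + q z" if t: "0 < t" "t < 1" for t
  proof -
    define y where "y = (1 - t) *\<^sub>R p + t *\<^sub>R z"
    have y_c: "y - c = (1 - t) *\<^sub>R (p - c) + t *\<^sub>R (z - c)" by (simp add: y_def algebra_simps)
    have norm_y: "(norm (y - c))\<^sup>2
        = (1 - t) * (norm (p - c))\<^sup>2 + t * (norm (z - c))\<^sup>2 - t * (1 - t) * (norm (z - p))\<^sup>2"
      using norm_convex_combination_squared[of t "p - c" "z - c"] by (simp add: y_c)
    have inner_y: "g \<bullet> (y - c) = (1 - t) * (g \<bullet> (p - c)) + t * (g \<bullet> (z - c))"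
      by (simp add: y_c inner_add_right)
    have q_y: "q y = (1 - t) * q p + t * q z - t * (1 - t) * gap"
      unfolding q_def gap_def norm_y inner_y using \<open>\<alpha> > 0\<close> by (simp add: field_simps)
    have "ereal (a + q p) \<le> h y + ereal (q y)"
      using minimal[of y] a by (simp add: q_def)
    also have "\<dots> \<le> ereal ((1 - t) * a + t * b) + ereal (q y)"
      using convex_fun_le_convex_combination[OF convex a b, of t] t
      unfolding y_def by (intro add_right_mono) auto
    finally have "t * (a + q p + (1 - t) * gap) \<le> t * (b + q z)"
      by (simp add: q_y algebra_simps)
    then show ?thesis using t by simp
  qed
  then have "a + q p + gap \<le> b + q z" by (rule le_of_forall_unit_interval)
  then show ?thesis using a b by (simp add: q_def gap_def)
qed simp

theorem lemma2:
  fixes N :: nat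
    and f :: "nat \<Rightarrow> 'a::euclidean_space \<Rightarrow> real"
    and gf :: "nat \<Rightarrow> 'a \<Rightarrow> 'a"
    and Ln :: "nat \<Rightarrow> real"
    and h :: "'a \<Rightarrow> ereal"
    and \<tau> :: nat
    and dly :: "nat \<Rightarrow> nat \<Rightarrow> nat"
    and \<alpha> :: real
    and x :: "int \<Rightarrow> 'a"
  assumes N_pos: "1 \<le> N"
    and f_convex: "\<And>n. n \<in> {1..N} \<Longrightarrow> convex_on UNIV (f n)"
    and f_grad: "\<And>n z. n \<in> {1..N} \<Longrightarrow> (f n has_derivative (\<lambda>v. gf n z \<bullet> v)) (at z)"
    and f_lip: "\<And>n y z. n \<in> {1..N} \<Longrightarrow> norm (gf n y - gf n z) \<le> Ln n * norm (y - z)"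
    and h_proper: "proper_fun h"
    and h_closed: "closed_fun h"
    and h_convex: "convex_fun h"
    and h_subdiff: "\<And>z. z \<in> effective_domain h \<Longrightarrow> subdifferential h z \<noteq> {}"
    and delay_bound: "\<And>k n. n \<in> {1..N} \<Longrightarrow> dly k n \<le> \<tau>"
    and alpha_pos: "\<alpha> > 0"
    and x_neg: "\<And>j. j < 0 \<Longrightarrow> x j = x 0"
    and x_step: "\<And>(k::nat) y.
       h (x (int k + 1)) + ereal ((\<Sum>n\<in>{1..N}. gf n (x (int k - int (dly k n)))) \<bullet> (x (int k + 1) - x (int k))
          + 1 / (2 * \<alpha>) * (norm (x (int k + 1) - x (int k)))\<^sup>2)
       \<le> h y + ereal ((\<Sum>n\<in>{1..N}. gf n (x (int k - int (dly k n)))) \<bullet> (y - x (int k))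
          + 1 / (2 * \<alpha>) * (norm (y - x (int k)))\<^sup>2)"
  shows "\<And>(k::nat) z.
    ereal (\<Sum>n\<in>{1..N}. f n (x (int k + 1))) + h (x (int k + 1))
    \<le> ereal (\<Sum>n\<in>{1..N}. f n z) + h z
       + ereal (1 / (2 * \<alpha>) * (norm (z - x (int k)))\<^sup>2
                - 1 / (2 * \<alpha>) * (norm (z - x (int k + 1)))\<^sup>2
                - 1 / (2 * \<alpha>) * (norm (x (int k + 1) - x (int k)))\<^sup>2
                + (\<Sum>n\<in>{1..N}. Ln n) * (real \<tau> + 1) / 2
                  * (\<Sum>j\<in>{int k - int \<tau> .. int k}. (norm (x (j + 1) - x j))\<^sup>2))"
proof -
  fix k :: nat and z :: 'a
  define S where "S = (\<Sum>j\<in>{int k - int \<tau> .. int k}. (norm (x (j + 1) - x j))\<^sup>2)"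
  obtain b :: 'a where "b \<in> Basis" using nonempty_Basis by blast
  then have "Ln n \<ge> 0" if "n \<in> {1..N}" for n
    using lipschitz_constant_nonneg[OF f_lip[OF that, of b 0]] nonzero_Basis by auto
  then have smooth_part:
    "(\<Sum>n\<in>{1..N}. f n (x (int k + 1))) \<le> (\<Sum>n\<in>{1..N}. f n z)
       + (\<Sum>n\<in>{1..N}. gf n (x (int k - int (dly k n)))) \<bullet> (x (int k + 1) - z)
       + (\<Sum>n\<in>{1..N}. Ln n) / 2 * ((real \<tau> + 1) * S)"
    unfolding S_def
    by (intro sum_delayed_gradient_bound f_convex f_grad f_lip
        norm_delayed_difference_squared_le delay_bound) auto
  have "h p \<noteq> -\<infinity>" for p using h_proper by (auto simp: proper_fun_def)
  then show "?thesis k z"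
    by (intro ereal_le_add_real_shift[OF prox_three_point[OF h_convex h_proper alpha_pos x_step[of k], of z]])
      (use smooth_part in \<open>auto simp: S_def inner_diff_right algebra_simps add_divide_distrib\<close>)
qed

end
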